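(* Let $T$ be a minimal homeomorphism of a compact metric space $X$, let $G$ be a locally compact second countable group, and let $f\colon X\to G$ be a continuous regular cocycle. Let $C\subseteq X\times G$ be a surjective $\mathbf T_f$-orbit closure and $H=\mathrm{Stab}(C)$. Then for every point $(x,g)\in C$ whose $\mathbf T_f$-orbit is dense in $C$ we have $C_x=\{g'\in G:(x,g')\in C\}=gH$. Furthermore, the set $C/H=\{(x,gH):(x,g)\in C\}\subseteq X\times G/H$ is compact and $\mathbf T_f\colon C/H\to C/H$, $(x,gH)\mapsto(Tx,f(x)gH)$, is a minimal homeomorphism. In particular, for every $x\in X$ there exists a compact set $K_x\subseteq G$ with $C_x=K_xH$.
   Context: The cocycle is $f(n,x)=f(T^{n-1}x)\cdots f(x)$ for $n\ge1$, $f(0,x)=\mathbf 1_G$, $f(n,x)=f(-n,T^nx)^{-1}$ for $n<0$. The skew product is the homeomorphism $\mathbf T_f(x,g)=(Tx,f(x)g)$ of $X\times G$, so $\mathbf T_f^n(x,g)=(T^nx,f(n,x)g)$. A surjective $\mathbf T_f$-orbit closure is the closure of the $\mathbf T_f$-orbit $\{\mathbf T_f^n(x_0,g_0):n\in\mathbb Z\}$ of a single point which projects onto all of $X$ under the first coordinate projection; $f$ is called regular if such an orbit closure exists. For a closed set $C\subseteq X\times G$, $\mathrm{Stab}(C)=\{h\in G: R_h(C)=C\}$ where $R_h(x,g)=(x,gh^{-1})$; this is a closed subgroup. *)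

theory Defs
  imports "HOL-Analysis.Analysis"
begin

text \<open>Groups are written additively (class group_add, not necessarily commutative):
  the product g h of the paper is g + h, h inverse is - h, the unit is 0.\<close>

definition topological_group :: "'g::{group_add,topological_space} itself \<Rightarrow> bool" where
  "topological_group _ \<longleftrightarrow>
     continuous_on UNIV (\<lambda>p::'g \<times> 'g. fst p + snd p) \<and> continuous_on UNIV (uminus :: 'g \<Rightarrow> 'g)"

definition Tpow :: "('a \<Rightarrow> 'a) \<Rightarrow> int \<Rightarrow> 'a \<Rightarrow> 'a" where
  "Tpow T n x = (if 0 \<le> n then (T ^^ nat n) x else (inv T ^^ nat (- n)) x)"

definition minimal_homeo :: "('a::topological_space \<Rightarrow> 'a) \<Rightarrow> bool" where
  "minimal_homeo T \<longleftrightarrow> bij T \<and> continuous_on UNIV T \<and> continuous_on UNIV (inv T) \<and>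
     (\<forall>x. closure (range (\<lambda>n. Tpow T n x)) = UNIV)"

fun cocycle_nat :: "('a \<Rightarrow> 'a) \<Rightarrow> ('a \<Rightarrow> 'g::group_add) \<Rightarrow> nat \<Rightarrow> 'a \<Rightarrow> 'g" where
  "cocycle_nat T f 0 x = 0"
| "cocycle_nat T f (Suc n) x = f ((T ^^ n) x) + cocycle_nat T f n x"

definition cocycle :: "('a \<Rightarrow> 'a) \<Rightarrow> ('a \<Rightarrow> 'g::group_add) \<Rightarrow> int \<Rightarrow> 'a \<Rightarrow> 'g" where
  "cocycle T f n x = (if 0 \<le> n then cocycle_nat T f (nat n) x
                      else - cocycle_nat T f (nat (- n)) (Tpow T n x))"

definition skew :: "('a \<Rightarrow> 'a) \<Rightarrow> ('a \<Rightarrow> 'g::group_add) \<Rightarrow> 'a \<times> 'g \<Rightarrow> 'a \<times> 'g" where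
  "skew T f p = (T (fst p), f (fst p) + snd p)"

definition skew_pow :: "('a \<Rightarrow> 'a) \<Rightarrow> ('a \<Rightarrow> 'g::group_add) \<Rightarrow> int \<Rightarrow> 'a \<times> 'g \<Rightarrow> 'a \<times> 'g" where
  "skew_pow T f n p = (Tpow T n (fst p), cocycle T f n (fst p) + snd p)"

definition skew_orbit :: "('a \<Rightarrow> 'a) \<Rightarrow> ('a \<Rightarrow> 'g::group_add) \<Rightarrow> 'a \<times> 'g \<Rightarrow> ('a \<times> 'g) set" where
  "skew_orbit T f p = range (\<lambda>n. skew_pow T f n p)"

definition surj_orbit_closure ::
  "('a \<Rightarrow> 'a) \<Rightarrow> ('a \<Rightarrow> 'g::{group_add,topological_space}) \<Rightarrow> ('a::topological_space \<times> 'g) set \<Rightarrow> bool" where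
  "surj_orbit_closure T f C \<longleftrightarrow> (\<exists>p. C = closure (skew_orbit T f p)) \<and> fst ` C = UNIV"

definition regular_cocycle ::
  "('a::topological_space \<Rightarrow> 'a) \<Rightarrow> ('a \<Rightarrow> 'g::{group_add,topological_space}) \<Rightarrow> bool" where
  "regular_cocycle T f \<longleftrightarrow> (\<exists>C. surj_orbit_closure T f C)"

definition Stab :: "('a \<times> 'g::group_add) set \<Rightarrow> 'g set" where
  "Stab C = {h. (\<lambda>(x,g). (x, g + - h)) ` C = C}"

definition fibre :: "('a \<times> 'g) set \<Rightarrow> 'a \<Rightarrow> 'g set" where
  "fibre C x = {g'. (x, g') \<in> C}"

definition lcoset :: "'g::group_add \<Rightarrow> 'g set \<Rightarrow> 'g set" where
  "lcoset g H = (\<lambda>h. g + h) ` H"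

definition setprod :: "'g::group_add set \<Rightarrow> 'g set \<Rightarrow> 'g set" where
  "setprod K H = {k + h |k h. k \<in> K \<and> h \<in> H}"

definition coset_space_topology :: "'g::{group_add,topological_space} set \<Rightarrow> 'g set topology" where
  "coset_space_topology H =
     topology (\<lambda>U. U \<subseteq> range (\<lambda>g. lcoset g H) \<and> open {g. lcoset g H \<in> U})"

definition quot_set :: "('a \<times> 'g::group_add) set \<Rightarrow> 'g set \<Rightarrow> ('a \<times> 'g set) set" where
  "quot_set C H = (\<lambda>(x,g). (x, lcoset g H)) ` C"

definition quot_top :: "('a::topological_space \<times> 'g::{group_add,topological_space}) set \<Rightarrow> 'g set \<Rightarrow> ('a \<times> 'g set) topology" where
  "quot_top C H = subtopology (prod_topology euclidean (coset_space_topology H)) (quot_set C H)"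

definition quot_map :: "('a \<Rightarrow> 'a) \<Rightarrow> ('a \<Rightarrow> 'g::group_add) \<Rightarrow> 'a \<times> 'g set \<Rightarrow> 'a \<times> 'g set" where
  "quot_map T f p = (T (fst p), (\<lambda>a. f (fst p) + a) ` snd p)"

definition quot_pow :: "('a \<Rightarrow> 'a) \<Rightarrow> ('a \<Rightarrow> 'g::group_add) \<Rightarrow> int \<Rightarrow> 'a \<times> 'g set \<Rightarrow> 'a \<times> 'g set" where
  "quot_pow T f n p = (Tpow T n (fst p), (\<lambda>a. cocycle T f n (fst p) + a) ` snd p)"

end

theory Submission
  imports Defs
begin

text \<open>
  The right shifts right_shift h (x, g) = (x, g - h) commute with the skew product. If (x, g) has
  dense orbit in C and (x, g') \<in> C, the shift by - g' + g sends (x, g) to (x, g') and hence C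
  into C, so the fibre of C over x is g + semistab C for the closed semigroup
  semistab C = {h. right_shift h ` C \<subseteq> C}. A Baire category argument, at a point where the
  fibres of C vary lower semicontinuously, shows that semistab C is closed under negation, so
  it equals Stab C. Minimality of T and compactness of X give a compact K meeting every fibre,
  whence C \<subseteq> X \<times> (K + Stab C): this gives the compactness of C/Stab C and the
  decomposition of the fibres. Finally, for q \<in> C the closure of the Stab C-saturated orbit of
  q is a closed subset of C invariant under the skew product and the shifts; its projection to
  X is closed and T-invariant, hence all of X, so it meets the fibre p0 + Stab C over the first
  coordinate of p0 and therefore equals C. This is the minimality of C/Stab C.
\<close>

lemma Tpow_0 [simp]: "Tpow T 0 x = x"
  by (simp add: Tpow_def)

lemma Tpow_plus_1:
  assumes "bij T"
  shows "Tpow T (n + 1) x = T (Tpow T n x)"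
proof (cases "0 \<le> n")
  case True
  then have "nat (n + 1) = Suc (nat n)" by simp
  with True show ?thesis by (simp add: Tpow_def)
next
  case False
  define k where "k = nat (- n - 1)"
  with False have k: "n = - int k - 1" by simp
  then have "nat (- n) = Suc k" "nat (- (n + 1)) = k" by simp_all
  with False k assms show ?thesis
    by (auto simp add: Tpow_def bij_is_surj surj_f_inv_f)
qed

lemma Tpow_add:
  assumes "bij T"
  shows "Tpow T (m + n) x = Tpow T m (Tpow T n x)"
proof (induction m rule: int_induct[where k = 0])
  case (step1 i)
  then show ?case using Tpow_plus_1[OF assms, of "i + n"] Tpow_plus_1[OF assms, of i]
    by (simp add: ac_simps)
next
  case (step2 i)
  have "T (Tpow T (i - 1 + n) x) = T (Tpow T (i - 1) (Tpow T n x))"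
    using step2 Tpow_plus_1[OF assms, of "i - 1 + n"] Tpow_plus_1[OF assms, of "i - 1"]
    by (simp add: ac_simps)
  then show ?case using assms by (simp add: bij_is_inj inj_eq)
qed simp

lemma cocycle_nat_Suc_right: "cocycle_nat T f (Suc n) x = cocycle_nat T f n (T x) + f x"
  by (induction n) (simp_all add: funpow_swap1 add.assoc)

lemma cocycle_0 [simp]: "cocycle T f 0 x = 0"
  by (simp add: cocycle_def)

lemma cocycle_plus_1:
  assumes "bij T"
  shows "cocycle T f (n + 1) x = f (Tpow T n x) + cocycle T f n x"
proof (cases "0 \<le> n")
  case True
  then have "nat (n + 1) = Suc (nat n)" by simp
  with True show ?thesis by (simp add: cocycle_def Tpow_def)
next
  case False
  define k where "k = nat (- n - 1)"
  with False have k: "n = - int k - 1" by simp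
  define y where "y = Tpow T n x"
  have Ty: "T y = Tpow T (n + 1) x" by (simp add: y_def Tpow_plus_1[OF assms])
  have "nat (- n) = Suc k" using k by simp
  with False have "cocycle T f n x = - cocycle_nat T f (Suc k) y"
    by (simp add: cocycle_def y_def del: cocycle_nat.simps(2))
  also have "\<dots> = - (cocycle_nat T f k (T y) + f y)"
    by (simp only: cocycle_nat_Suc_right)
  finally have "cocycle T f n x = - (cocycle_nat T f k (T y) + f y)" .
  moreover have "cocycle T f (n + 1) x = - cocycle_nat T f k (T y)"
    using k Ty by (cases "k = 0") (simp_all add: cocycle_def)
  ultimately show ?thesis
    unfolding y_def[symmetric] by (simp only: minus_add add_minus_cancel)
qed

lemma cocycle_add:
  assumes "bij T"
  shows "cocycle T f (m + n) x = cocycle T f m (Tpow T n x) + cocycle T f n x"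
proof (induction m rule: int_induct[where k = 0])
  case (step1 i)
  then show ?case
    using cocycle_plus_1[OF assms, of f "i + n"] cocycle_plus_1[OF assms, of f i]
    by (simp add: ac_simps Tpow_add[OF assms])
next
  case (step2 i)
  have "f (Tpow T (i - 1 + n) x) + cocycle T f (i - 1 + n) x
      = f (Tpow T (i - 1) (Tpow T n x)) + (cocycle T f (i - 1) (Tpow T n x) + cocycle T f n x)"
    using step2 cocycle_plus_1[OF assms, of f "i - 1 + n"] cocycle_plus_1[OF assms, of f "i - 1"]
    by (simp add: ac_simps Tpow_add[OF assms])
  then show ?case by (simp add: Tpow_add[OF assms] add.assoc)
qed simp

lemma skew_pow_0 [simp]: "skew_pow T f 0 p = p"
  by (simp add: skew_pow_def)

lemma skew_pow_add:
  assumes "bij T"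
  shows "skew_pow T f (m + n) p = skew_pow T f m (skew_pow T f n p)"
  by (simp add: skew_pow_def Tpow_add[OF assms] cocycle_add[OF assms] add.assoc)

lemma skew_orbit_skew_pow:
  assumes "bij T"
  shows "skew_orbit T f (skew_pow T f n p) = skew_orbit T f p"
proof -
  have "skew_orbit T f (skew_pow T f n p) = (\<lambda>m. skew_pow T f m p) ` range (\<lambda>m. m + n)"
    unfolding skew_orbit_def image_image by (simp only: skew_pow_add[OF assms])
  also have "range (\<lambda>m::int. m + n) = UNIV"
    by (metis diff_add_cancel surj_def)
  finally show ?thesis
    by (simp add: skew_orbit_def)
qed

lemma continuous_on_group_add:
  fixes a b :: "'x::topological_space \<Rightarrow> 'g::{group_add,topological_space}"
  assumes "topological_group TYPE('g)" "continuous_on S a" "continuous_on S b"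
  shows "continuous_on S (\<lambda>x. a x + b x)"
proof -
  have "continuous_on UNIV (\<lambda>p::'g \<times> 'g. fst p + snd p)"
    using assms(1) by (simp add: topological_group_def)
  from continuous_on_compose2[OF this continuous_on_Pair[OF assms(2,3)]] show ?thesis
    by simp
qed

lemma continuous_on_group_uminus:
  fixes a :: "'x::topological_space \<Rightarrow> 'g::{group_add,topological_space}"
  assumes "topological_group TYPE('g)" "continuous_on S a"
  shows "continuous_on S (\<lambda>x. - a x)"
proof -
  have "continuous_on UNIV (uminus :: 'g \<Rightarrow> 'g)"
    using assms(1) by (simp add: topological_group_def)
  from continuous_on_compose2[OF this assms(2)] show ?thesis
    by simp
qed

lemma continuous_on_funpow:
  fixes T :: "'a::topological_space \<Rightarrow> 'a"
  assumes "continuous_on UNIV T"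
  shows "continuous_on UNIV (T ^^ k)"
proof (induction k)
  case (Suc k)
  from continuous_on_compose2[OF assms Suc] show ?case
    by (simp add: o_def)
qed (simp add: id_def)

lemma continuous_on_Tpow:
  assumes "continuous_on UNIV T" "continuous_on UNIV (inv T)"
  shows "continuous_on UNIV (Tpow T n)"
  using continuous_on_funpow[OF assms(1)] continuous_on_funpow[OF assms(2)]
  by (cases "0 \<le> n") (simp_all add: Tpow_def[abs_def])

lemma continuous_on_cocycle_nat:
  assumes "topological_group TYPE('g)" "continuous_on UNIV T"
    and "continuous_on UNIV (f :: _ \<Rightarrow> 'g::{group_add,topological_space})"
  shows "continuous_on UNIV (cocycle_nat T f k)"
proof (induction k)
  case (Suc k)
  have "continuous_on UNIV (\<lambda>x. f ((T ^^ k) x))"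
    using continuous_on_compose2[OF assms(3) continuous_on_funpow[OF assms(2)]] by simp
  from continuous_on_group_add[OF assms(1) this Suc] show ?case
    by simp
qed simp

lemma continuous_on_cocycle:
  assumes "topological_group TYPE('g)" "continuous_on UNIV T" "continuous_on UNIV (inv T)"
    and "continuous_on UNIV (f :: _ \<Rightarrow> 'g::{group_add,topological_space})"
  shows "continuous_on UNIV (cocycle T f n)"
proof (cases "0 \<le> n")
  case True
  then show ?thesis
    using continuous_on_cocycle_nat[OF assms(1,2,4)] by (simp add: cocycle_def[abs_def])
next
  case False
  have "continuous_on UNIV (\<lambda>x. cocycle_nat T f (nat (- n)) (Tpow T n x))"
    using continuous_on_compose2[OF continuous_on_cocycle_nat[OF assms(1,2,4)]
        continuous_on_Tpow[OF assms(2,3)]] by simp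
  with False show ?thesis
    using continuous_on_group_uminus[OF assms(1)] by (simp add: cocycle_def[abs_def])
qed

lemma continuous_on_skew_pow:
  assumes "topological_group TYPE('g)" "continuous_on UNIV T" "continuous_on UNIV (inv T)"
    and "continuous_on UNIV (f :: _ \<Rightarrow> 'g::{group_add,topological_space})"
  shows "continuous_on UNIV (skew_pow T f n)"
proof -
  have "continuous_on UNIV (\<lambda>p::_ \<times> 'g. Tpow T n (fst p))"
    using continuous_on_compose2[OF continuous_on_Tpow[OF assms(2,3)]
        continuous_on_fst[OF continuous_on_id]]
    by simp
  moreover have "continuous_on UNIV (\<lambda>p::_ \<times> 'g. cocycle T f n (fst p) + snd p)"
    using continuous_on_compose2[OF continuous_on_cocycle[OF assms]
        continuous_on_fst[OF continuous_on_id]]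
    by (intro continuous_on_group_add[OF assms(1)] continuous_intros) simp_all
  ultimately show ?thesis
    unfolding skew_pow_def[abs_def] by (rule continuous_on_Pair)
qed

definition right_shift :: "'g::group_add \<Rightarrow> 'a \<times> 'g \<Rightarrow> 'a \<times> 'g" where
  "right_shift h p = (fst p, snd p + - h)"

definition semistab :: "('a \<times> 'g::group_add) set \<Rightarrow> 'g set" where
  "semistab C = {h. right_shift h ` C \<subseteq> C}"

lemma right_shift_0 [simp]: "right_shift 0 p = p"
  by (simp add: right_shift_def)

lemma right_shift_add: "right_shift (a + b) p = right_shift a (right_shift b p)"
  by (simp only: right_shift_def fst_conv snd_conv minus_add add.assoc)

lemma right_shift_skew_pow: "right_shift h (skew_pow T f n p) = skew_pow T f n (right_shift h p)"
  by (simp add: right_shift_def skew_pow_def add_diff_eq)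

lemma continuous_on_right_shift:
  assumes "topological_group TYPE('g::{group_add,topological_space})"
  shows "continuous_on UNIV (right_shift (h::'g) :: 'a::topological_space \<times> 'g \<Rightarrow> _)"
  unfolding right_shift_def[abs_def]
  by (intro continuous_on_Pair continuous_on_group_add[OF assms] continuous_intros)

lemma semistab_iff: "h \<in> semistab C \<longleftrightarrow> (\<forall>x g. (x, g) \<in> C \<longrightarrow> (x, g + - h) \<in> C)"
  by (auto simp: semistab_def right_shift_def)

lemma zero_in_semistab: "0 \<in> semistab C"
  by (simp add: semistab_def)

lemma add_in_semistab: "a \<in> semistab C \<Longrightarrow> b \<in> semistab C \<Longrightarrow> a + b \<in> semistab C"
  by (fastforce simp: semistab_def right_shift_add)

lemma Stab_iff_semistab:
  fixes C :: "('a \<times> 'g::group_add) set"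
  shows "h \<in> Stab C \<longleftrightarrow> h \<in> semistab C \<and> - h \<in> semistab C"
proof -
  have shift: "(\<lambda>(x, g). (x, g + - h)) = right_shift h"
    by (simp add: right_shift_def fun_eq_iff)
  have inverse: "right_shift h (right_shift (- h) p) = p" "right_shift (- h) (right_shift h p) = p"
    for p :: "'a \<times> 'g"
    by (simp_all flip: right_shift_add)
  have "right_shift h ` C = C \<longleftrightarrow> right_shift h ` C \<subseteq> C \<and> right_shift (- h) ` C \<subseteq> C"
  proof
    assume eq: "right_shift h ` C = C"
    have "right_shift (- h) ` C = right_shift (- h) ` right_shift h ` C"
      by (simp add: eq)
    also have "\<dots> = C"
      by (simp add: image_image inverse)
    finally show "right_shift h ` C \<subseteq> C \<and> right_shift (- h) ` C \<subseteq> C"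
      using eq by simp
  next
    assume sub: "right_shift h ` C \<subseteq> C \<and> right_shift (- h) ` C \<subseteq> C"
    have "C = right_shift h ` right_shift (- h) ` C"
      by (simp add: image_image inverse)
    with sub show "right_shift h ` C = C"
      by blast
  qed
  then show ?thesis
    unfolding Stab_def semistab_def mem_Collect_eq shift .
qed

lemma right_shift_Stab_mem: "h \<in> Stab C \<Longrightarrow> q \<in> C \<Longrightarrow> right_shift h q \<in> C"
  unfolding Stab_def right_shift_def by (auto simp: case_prod_beta')

lemma Stab_add_mem_iff:
  assumes "h \<in> Stab C"
  shows "(x, g + h) \<in> C \<longleftrightarrow> (x, g) \<in> C"
proof
  assume "(x, g + h) \<in> C"
  moreover have "h \<in> semistab C"
    using assms by (simp add: Stab_iff_semistab)
  ultimately have "(x, g + h + - h) \<in> C"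
    unfolding semistab_iff by blast
  then show "(x, g) \<in> C"
    by (simp add: add.assoc)
next
  assume "(x, g) \<in> C"
  moreover have "- h \<in> semistab C"
    using assms by (simp add: Stab_iff_semistab)
  ultimately have "(x, g + - (- h)) \<in> C"
    unfolding semistab_iff by blast
  then show "(x, g + h) \<in> C"
    by simp
qed

lemma Hausdorff_space_euclidean_t2: "Hausdorff_space (euclidean :: 'a::t2_space topology)"
  unfolding Hausdorff_space_def disjnt_def by (simp, meson hausdorff)

lemma closed_fst_image_Int_Times:
  assumes "closed S" "compact K"
  shows "closed (fst ` (S \<inter> UNIV \<times> K))"
proof -
  have "\<exists>A. open A \<and> a \<in> A \<and> A \<subseteq> - fst ` (S \<inter> UNIV \<times> K)"
    if a: "a \<notin> fst ` (S \<inter> UNIV \<times> K)" for a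
  proof -
    have "{a} \<times> K \<subseteq> - S"
      using a by (auto intro: rev_image_eqI)
    then obtain A where "a \<in> A" "open A" "A \<times> K \<subseteq> - S"
      using Elementary_Topology.tube_lemma[OF assms(2) open_Compl[OF assms(1)]] by blast
    moreover from this(3) have "A \<subseteq> - fst ` (S \<inter> UNIV \<times> K)"
      by auto
    ultimately show ?thesis
      by blast
  qed
  then have "open (- fst ` (S \<inter> UNIV \<times> K))"
    by (subst open_subopen) simp
  then show ?thesis
    by (simp add: closed_def)
qed

lemma closed_setprod:
  fixes K H :: "'g::{group_add,topological_space} set"
  assumes "topological_group TYPE('g)" "compact K" "closed H"
  shows "closed (setprod K H)"
proof -
  define \<phi> where "\<phi> = (\<lambda>p::'g \<times> 'g. - snd p + fst p)"
  have "continuous_on UNIV \<phi>"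
    unfolding \<phi>_def
    by (intro continuous_on_group_add[OF assms(1)] continuous_on_group_uminus[OF assms(1)]
        continuous_intros)
  with assms(3) have "closed (\<phi> -` H)"
    by (rule closed_vimage)
  moreover have "setprod K H = fst ` (\<phi> -` H \<inter> UNIV \<times> K)"
  proof (intro set_eqI iffI)
    fix a
    assume "a \<in> setprod K H"
    then obtain k h where "a = k + h" "k \<in> K" "h \<in> H"
      by (auto simp: setprod_def)
    then show "a \<in> fst ` (\<phi> -` H \<inter> UNIV \<times> K)"
      by (intro image_eqI[of _ _ "(a, k)"]) (simp_all add: \<phi>_def add.assoc[symmetric])
  next
    fix a
    assume "a \<in> fst ` (\<phi> -` H \<inter> UNIV \<times> K)"
    then obtain k where "k \<in> K" "- k + a \<in> H"
      by (auto simp: \<phi>_def)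
    moreover have "a = k + (- k + a)"
      by (simp add: add.assoc[symmetric])
    ultimately show "a \<in> setprod K H"
      unfolding setprod_def by blast
  qed
  ultimately show ?thesis
    using closed_fst_image_Int_Times[OF _ assms(2)] by simp
qed

definition add_subgroup :: "'g::group_add set \<Rightarrow> bool" where
  "add_subgroup H \<longleftrightarrow> 0 \<in> H \<and> (\<forall>a\<in>H. \<forall>b\<in>H. a + b \<in> H) \<and> (\<forall>a\<in>H. - a \<in> H)"

lemma add_subgroup_Stab: "add_subgroup (Stab C)"
proof -
  have "a + b \<in> Stab C" if "a \<in> Stab C" "b \<in> Stab C" for a b
    using that add_in_semistab[of a C b] add_in_semistab[of "- b" C "- a"]
    by (simp add: Stab_iff_semistab minus_add)
  then show ?thesis
    by (simp add: add_subgroup_def Stab_iff_semistab zero_in_semistab)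
qed

lemma image_plus_lcoset: "(\<lambda>a. c + a) ` lcoset g H = lcoset (c + g) H"
  unfolding lcoset_def by (auto simp: image_image add.assoc)

lemma lcoset_add_absorb:
  assumes "add_subgroup H" "h \<in> H"
  shows "lcoset (g + h) H = lcoset g H"
proof -
  have "(\<lambda>a. h + a) ` H = H"
  proof (intro antisym subsetI)
    fix a
    assume "a \<in> H"
    with assms have "- h + a \<in> H"
      by (simp add: add_subgroup_def)
    then show "a \<in> (\<lambda>a. h + a) ` H"
      by (intro image_eqI[of _ _ "- h + a"]) (simp_all add: add.assoc[symmetric])
  qed (use assms in \<open>auto simp: add_subgroup_def\<close>)
  then show ?thesis
    using image_plus_lcoset[of g h H] by (simp add: lcoset_def)
qed

lemma openin_coset_space_topology:
  "openin (coset_space_topology H) U \<longleftrightarrow>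
     U \<subseteq> range (\<lambda>g. lcoset g H) \<and> open {g. lcoset g H \<in> U}"
proof -
  have "istopology (\<lambda>U. U \<subseteq> range (\<lambda>g. lcoset g H) \<and> open {g. lcoset g H \<in> U})"
    unfolding istopology_def
  proof (rule conjI; intro allI impI)
    fix S T :: "'a set set"
    assume "S \<subseteq> range (\<lambda>g. lcoset g H) \<and> open {g. lcoset g H \<in> S}"
      and "T \<subseteq> range (\<lambda>g. lcoset g H) \<and> open {g. lcoset g H \<in> T}"
    moreover have "{g. lcoset g H \<in> S \<inter> T} = {g. lcoset g H \<in> S} \<inter> {g. lcoset g H \<in> T}"
      by auto
    ultimately show "S \<inter> T \<subseteq> range (\<lambda>g. lcoset g H) \<and> open {g. lcoset g H \<in> S \<inter> T}"
      by auto
  next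
    fix \<K> :: "'a set set set"
    assume "\<forall>K\<in>\<K>. K \<subseteq> range (\<lambda>g. lcoset g H) \<and> open {g. lcoset g H \<in> K}"
    moreover have "{g. lcoset g H \<in> \<Union>\<K>} = (\<Union>K\<in>\<K>. {g. lcoset g H \<in> K})"
      by auto
    ultimately show "\<Union>\<K> \<subseteq> range (\<lambda>g. lcoset g H) \<and> open {g. lcoset g H \<in> \<Union>\<K>}"
      by auto
  qed
  then show ?thesis
    by (simp add: coset_space_topology_def)
qed

lemma topspace_coset_space_topology: "topspace (coset_space_topology H) = range (\<lambda>g. lcoset g H)"
  using openin_subset[of "coset_space_topology H" "range (\<lambda>g. lcoset g H)"]
  unfolding topspace_def openin_coset_space_topology by auto

lemma quotient_map_lcoset: "quotient_map euclidean (coset_space_topology H) (\<lambda>g. lcoset g H)"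
  unfolding quotient_map_def topspace_coset_space_topology openin_coset_space_topology
  by auto

lemma continuous_map_coset_action:
  fixes \<phi> :: "'a::t2_space \<Rightarrow> 'a" and \<psi> :: "'a \<Rightarrow> 'g::{group_add,topological_space}"
  assumes "locally_compact_space (euclidean :: 'a topology)" "topological_group TYPE('g)"
    and "continuous_on UNIV \<phi>" "continuous_on UNIV \<psi>"
  shows "continuous_map (prod_topology euclidean (coset_space_topology H))
           (prod_topology euclidean (coset_space_topology H))
           (\<lambda>p. (\<phi> (fst p), (\<lambda>a. \<psi> (fst p) + a) ` snd p))"
proof -
  let ?\<pi> = "\<lambda>(x::'a, g). (x, lcoset g H)"
  have \<pi>: "quotient_map euclidean (prod_topology euclidean (coset_space_topology H)) ?\<pi>"
    using quotient_map_prod_right[OF assms(1) _ quotient_map_lcoset]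
    by (simp add: Hausdorff_space_euclidean_t2)
  have "continuous_on UNIV (\<lambda>p::'a \<times> 'g. \<psi> (fst p) + snd p)"
    using continuous_on_compose2[OF assms(4) continuous_on_fst[OF continuous_on_id]]
    by (intro continuous_on_group_add[OF assms(2)] continuous_on_snd continuous_on_id) simp
  moreover have "continuous_on UNIV (\<lambda>p::'a \<times> 'g. \<phi> (fst p))"
    using continuous_on_compose2[OF assms(3) continuous_on_fst[OF continuous_on_id]] by simp
  ultimately have "continuous_map euclidean euclidean (\<lambda>p::'a \<times> 'g. (\<phi> (fst p), \<psi> (fst p) + snd p))"
    by (simp add: continuous_on_Pair)
  then have "continuous_map euclidean (prod_topology euclidean (coset_space_topology H))
      (?\<pi> \<circ> (\<lambda>p. (\<phi> (fst p), \<psi> (fst p) + snd p)))"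
    using continuous_map_compose quotient_imp_continuous_map[OF \<pi>] by blast
  also have "?\<pi> \<circ> (\<lambda>p. (\<phi> (fst p), \<psi> (fst p) + snd p))
      = (\<lambda>p. (\<phi> (fst p), (\<lambda>a. \<psi> (fst p) + a) ` snd p)) \<circ> ?\<pi>"
    by (auto simp: fun_eq_iff image_plus_lcoset)
  finally show ?thesis
    by (rule continuous_compose_quotient_map[OF \<pi>])
qed

lemma continuous_map_coset_proj:
  "continuous_map euclidean (prod_topology euclidean (coset_space_topology H))
     (\<lambda>(x::'a::topological_space, g::'g::{group_add,topological_space}). (x, lcoset g H))"
proof -
  have "continuous_map (prod_topology euclidean euclidean) (coset_space_topology H)
      ((\<lambda>g. lcoset g H) \<circ> snd)"
    using continuous_map_snd quotient_imp_continuous_map[OF quotient_map_lcoset]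
    by (rule continuous_map_compose)
  then have "continuous_map (prod_topology euclidean euclidean)
      (prod_topology euclidean (coset_space_topology H)) (\<lambda>p::'a \<times> 'g. (fst p, lcoset (snd p) H))"
    by (intro continuous_map_pairedI continuous_map_fst) (simp add: o_def)
  then show ?thesis
    by (simp add: case_prod_beta')
qed

lemma topspace_quot_top: "topspace (quot_top C H) = quot_set C H"
  by (auto simp: quot_top_def quot_set_def topspace_coset_space_topology)

lemma quot_pow_0 [simp]: "quot_pow T f 0 p = p"
  by (simp add: quot_pow_def)

lemma quot_pow_1: "quot_pow T f 1 = quot_map T f"
  by (simp add: fun_eq_iff quot_pow_def quot_map_def Tpow_def cocycle_def)

lemma quot_pow_add:
  assumes "bij T"
  shows "quot_pow T f (m + n) p = quot_pow T f m (quot_pow T f n p)"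
  by (simp add: quot_pow_def Tpow_add[OF assms] cocycle_add[OF assms] image_image add.assoc)

lemma quot_pow_coset_proj:
  "quot_pow T f n ((\<lambda>(x, g). (x, lcoset g H)) q) = (\<lambda>(x, g). (x, lcoset g H)) (skew_pow T f n q)"
  by (cases q) (simp add: quot_pow_def skew_pow_def image_plus_lcoset)

lemma ex_countable_compact_network:
  assumes "locally_compact_space (euclidean :: 'g::{t2_space,second_countable_topology} topology)"
  shows "\<exists>\<Q>::'g set set. countable \<Q> \<and> (\<forall>Q\<in>\<Q>. compact Q) \<and>
           (\<forall>W b. open W \<longrightarrow> b \<in> W \<longrightarrow> (\<exists>Q\<in>\<Q>. b \<in> Q \<and> Q \<subseteq> W))"
proof -
  obtain \<B> :: "'g set set" where \<B>: "countable \<B>" "topological_basis \<B>"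
    using ex_countable_basis by blast
  have "regular_space (euclidean :: 'g topology)"
    using locally_compact_Hausdorff_imp_regular_space[OF assms Hausdorff_space_euclidean_t2] .
  then have base: "neighbourhood_base_of (\<lambda>V. compactin euclidean V \<and> closedin euclidean V)
      (euclidean :: 'g topology)"
    using locally_compact_regular_space_neighbourhood_base assms by blast
  define \<Q> where "\<Q> = closure ` {B \<in> \<B>. compact (closure B)}"
  have "\<exists>Q\<in>\<Q>. b \<in> Q \<and> Q \<subseteq> W" if "open W" "b \<in> W" for W b
  proof -
    have "\<exists>U V. open U \<and> (compact V \<and> closed V) \<and> b \<in> U \<and> U \<subseteq> V \<and> V \<subseteq> W"
      using base that unfolding neighbourhood_base_of_def neighbourhood_base_at_def by simp
    then obtain U V where UV: "open U" "compact V" "closed V" "b \<in> U" "U \<subseteq> V" "V \<subseteq> W"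
      by blast
    obtain B where B: "B \<in> \<B>" "b \<in> B" "B \<subseteq> U"
      using topological_basisE[OF \<B>(2) UV(1,4)] by blast
    have "closure B \<subseteq> V"
      using B(3) UV(3,5) closure_minimal by blast
    then have "compact (closure B)"
      using compact_Int_closed[OF UV(2) closed_closure, of B] by (simp add: Int_absorb1)
    then have "closure B \<in> \<Q>"
      unfolding \<Q>_def using B(1) by blast
    then show ?thesis
      using \<open>closure B \<subseteq> V\<close> UV(6) B(2) closure_subset by blast
  qed
  moreover have "countable \<Q>" "\<forall>Q\<in>\<Q>. compact Q"
    unfolding \<Q>_def using \<B>(1) by auto
  ultimately show ?thesis
    by blast
qed

definition lsc_fibres_at :: "('a::topological_space \<times> 'g::topological_space) set \<Rightarrow> 'a \<Rightarrow> bool" where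
  "lsc_fibres_at C y \<longleftrightarrow>
     (\<forall>b\<in>fibre C y. \<forall>V. open V \<longrightarrow> b \<in> V \<longrightarrow> (\<forall>\<^sub>F y' in nhds y. fibre C y' \<inter> V \<noteq> {}))"

text \<open>Baire category: the boundaries of the closed sets fst ` (C \<inter> UNIV \<times> Q), Q running
  through a countable compact network of G, are nowhere dense; off their union the fibres
  of C vary lower semicontinuously.\<close>
lemma ex_lsc_fibres_at:
  fixes C :: "('a::t2_space \<times> 'g::{t2_space,second_countable_topology}) set"
  assumes "locally_compact_space (euclidean :: 'a topology)"
    and "locally_compact_space (euclidean :: 'g topology)" "closed C"
  shows "\<exists>y. lsc_fibres_at C y"
proof -
  obtain \<Q> :: "'g set set" where \<Q>: "countable \<Q>" "\<forall>Q\<in>\<Q>. compact Q"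
      "\<And>W b. open W \<Longrightarrow> b \<in> W \<Longrightarrow> \<exists>Q\<in>\<Q>. b \<in> Q \<and> Q \<subseteq> W"
    using ex_countable_compact_network[OF assms(2)] by blast
  define F where "F Q = fst ` (C \<inter> UNIV \<times> Q)" for Q
  have boundary: "closed (F Q - interior (F Q)) \<and> interior (F Q - interior (F Q)) = {}"
    if "Q \<in> \<Q>" for Q
  proof
    show "closed (F Q - interior (F Q))"
      unfolding F_def using closed_fst_image_Int_Times[OF assms(3)] \<Q>(2) that
      by (simp add: closed_Diff)
    have "interior (F Q - interior (F Q)) \<subseteq> interior (F Q)"
      by (simp add: interior_mono)
    then show "interior (F Q - interior (F Q)) = {}"
      using interior_subset by blast
  qed
  have "regular_space (euclidean :: 'a topology)"
    using locally_compact_Hausdorff_imp_regular_space[OF assms(1) Hausdorff_space_euclidean_t2] .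
  then have "euclidean interior_of (\<Union>Q\<in>\<Q>. F Q - interior (F Q)) = {}"
    using assms(1) \<Q>(1) boundary
    by (intro Baire_category_alt) (auto simp flip: closed_closedin)
  then have "(\<Union>Q\<in>\<Q>. F Q - interior (F Q)) \<noteq> UNIV"
    by auto
  then obtain y where y: "\<And>Q. Q \<in> \<Q> \<Longrightarrow> y \<notin> F Q - interior (F Q)"
    by blast
  have "\<forall>\<^sub>F y' in nhds y. fibre C y' \<inter> V \<noteq> {}"
    if yb: "(y, b) \<in> C" and V: "open V" "b \<in> V" for b V
  proof -
    obtain Q where Q: "Q \<in> \<Q>" "b \<in> Q" "Q \<subseteq> V"
      using \<Q>(3)[OF V] by blast
    have "y \<in> F Q"
      unfolding F_def using yb Q(2) by (auto intro: rev_image_eqI)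
    with y Q(1) have "y \<in> interior (F Q)"
      by blast
    moreover have "fibre C y' \<inter> V \<noteq> {}" if "y' \<in> interior (F Q)" for y'
      using that interior_subset Q(3) by (fastforce simp: F_def fibre_def)
    ultimately show ?thesis
      unfolding eventually_nhds by (blast intro: open_interior)
  qed
  then show ?thesis
    unfolding lsc_fibres_at_def fibre_def by blast
qed

lemma minimal_homeo_orbit_meets_open:
  assumes "minimal_homeo T" "open W" "W \<noteq> {}"
  shows "\<exists>n. Tpow T n y \<in> W"
proof -
  have "W \<inter> closure (range (\<lambda>n. Tpow T n y)) \<noteq> {}"
    using assms(1,3) by (simp add: minimal_homeo_def)
  then have "W \<inter> range (\<lambda>n. Tpow T n y) \<noteq> {}"
    by (simp add: open_Int_closure_eq_empty[OF assms(2)])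
  then show ?thesis
    by blast
qed

lemma minimal_homeo_finite_return:
  assumes "compact (UNIV :: 'a::topological_space set)" "minimal_homeo (T :: 'a \<Rightarrow> 'a)"
    and "open W" "W \<noteq> {}"
  shows "\<exists>N. finite N \<and> (\<forall>y. \<exists>n\<in>N. Tpow T n y \<in> W)"
proof -
  have "open (Tpow T n -` W)" for n
    using assms(2) open_vimage[OF assms(3) continuous_on_Tpow] by (simp add: minimal_homeo_def)
  moreover have "UNIV \<subseteq> (\<Union>n. Tpow T n -` W)"
  proof
    fix y :: 'a
    obtain n where "Tpow T n y \<in> W"
      using minimal_homeo_orbit_meets_open[OF assms(2-4)] by blast
    then show "y \<in> (\<Union>n. Tpow T n -` W)"
      by blast
  qed
  ultimately obtain N where "finite N" "UNIV \<subseteq> (\<Union>n\<in>N. Tpow T n -` W)"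
    by (rule compactE_image[OF assms(1)])
  then show ?thesis
    by blast
qed

locale surjective_orbit_closure =
  fixes T :: "'a::t2_space \<Rightarrow> 'a"
    and f :: "'a \<Rightarrow> 'g::{group_add,t2_space,second_countable_topology}"
    and C :: "('a \<times> 'g) set"
    and p0 :: "'a \<times> 'g"
  assumes compact_UNIV: "compact (UNIV :: 'a set)"
    and minimal: "minimal_homeo T"
    and topological_group: "topological_group TYPE('g)"
    and locally_compact: "locally_compact_space (euclidean :: 'g topology)"
    and continuous_f: "continuous_on UNIV f"
    and C_eq: "C = closure (skew_orbit T f p0)"
    and fst_C: "fst ` C = UNIV"
begin

lemma bij_T: "bij T"
  using minimal by (simp add: minimal_homeo_def)

lemma locally_compact_X: "locally_compact_space (euclidean :: 'a topology)"
  using compact_UNIV by (simp add: compact_imp_locally_compact_space compact_space_def)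

lemma continuous_on_skew_pow_T: "continuous_on UNIV (skew_pow T f n)"
  using minimal by (intro continuous_on_skew_pow topological_group continuous_f)
    (simp_all add: minimal_homeo_def)

lemma closed_C: "closed C"
  by (simp add: C_eq)

lemma skew_pow_in_C:
  assumes "q \<in> C"
  shows "skew_pow T f n q \<in> C"
proof -
  have "skew_pow T f n ` skew_orbit T f p0 \<subseteq> skew_orbit T f p0"
    by (auto simp: skew_orbit_def skew_pow_add[OF bij_T, symmetric])
  then have "skew_pow T f n ` C \<subseteq> C"
    unfolding C_eq using closure_subset
    by (intro image_closure_subset continuous_on_subset[OF continuous_on_skew_pow_T]) auto
  with assms show ?thesis
    by blast
qed

lemma closure_skew_orbit_eq_C:
  "closure (skew_orbit T f (skew_pow T f n p0)) = C"
  by (simp add: skew_orbit_skew_pow[OF bij_T] C_eq)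

lemma p0_in_C: "p0 \<in> C"
  using closure_subset C_eq unfolding skew_orbit_def
  by (metis rangeI skew_pow_0 subsetD)

lemma skew_orbit_p0_meets_open:
  assumes "open U" "U \<inter> C \<noteq> {}"
  shows "\<exists>n. skew_pow T f n p0 \<in> U"
proof -
  have "U \<inter> skew_orbit T f p0 \<noteq> {}"
    using assms C_eq open_Int_closure_eq_empty[OF assms(1)] by simp
  then show ?thesis
    unfolding skew_orbit_def by blast
qed

lemma ex_lsc_fibres_at_in_C: "\<exists>y b. lsc_fibres_at C y \<and> (y, b) \<in> C"
proof -
  obtain y where "lsc_fibres_at C y"
    using ex_lsc_fibres_at[OF locally_compact_X locally_compact closed_C] by blast
  moreover have "y \<in> fst ` C"
    by (simp add: fst_C)
  ultimately show ?thesis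
    by force
qed

lemma semistab_if_dense_orbit:
  assumes dense: "closure (skew_orbit T f (x, g)) = C" and "(x, g') \<in> C"
  shows "- g' + g \<in> semistab C"
proof -
  have shift: "right_shift (- g' + g) (x, g) = (x, g')"
    by (simp add: right_shift_def minus_add add.assoc)
  have "right_shift (- g' + g) ` skew_orbit T f (x, g) \<subseteq> C"
    using assms(2) by (auto simp: skew_orbit_def right_shift_skew_pow shift skew_pow_in_C)
  then have "right_shift (- g' + g) ` closure (skew_orbit T f (x, g)) \<subseteq> C"
    by (intro image_closure_subset closed_C
        continuous_on_subset[OF continuous_on_right_shift[OF topological_group]]) auto
  then show ?thesis
    by (simp add: semistab_def dense)
qed

lemma closed_semistab: "closed (semistab C)"
proof -
  have "semistab C = (\<Inter>q\<in>C. (\<lambda>h. right_shift h q) -` C)"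
    by (auto simp: semistab_def)
  moreover have shift: "continuous_on UNIV (\<lambda>h. right_shift h q)" for q :: "'a \<times> 'g"
    unfolding right_shift_def
    by (intro continuous_on_Pair continuous_on_group_add[OF topological_group]
        continuous_on_group_uminus[OF topological_group] continuous_intros)
  ultimately show ?thesis
    by (auto intro!: closed_vimage closed_C shift)
qed

text \<open>The Baire argument: near a point y of lower semicontinuity, a pair (b, b - s) in the
  fibre over y is approximated by pairs (u, t) with (x', t) on the dense orbit of p0 and
  (x', u) \<in> C; then - u + t \<in> semistab C is close to - s, and semistab C is closed.\<close>
lemma uminus_in_semistab:
  assumes s: "s \<in> semistab C"
  shows "- s \<in> semistab C"
proof (rule ccontr)
  assume "- s \<notin> semistab C"
  obtain y b where y: "lsc_fibres_at C y" and b: "(y, b) \<in> C"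
    using ex_lsc_fibres_at_in_C by blast
  with s have b': "(y, b + - s) \<in> C"
    by (simp add: semistab_iff)
  define \<phi> where "\<phi> = (\<lambda>p::'g \<times> 'g. - fst p + snd p)"
  have "continuous_on UNIV \<phi>"
    unfolding \<phi>_def
    by (intro continuous_on_group_add[OF topological_group]
        continuous_on_group_uminus[OF topological_group] continuous_intros)
  then have "open (\<phi> -` (- semistab C))"
    using closed_semistab by (intro open_vimage) auto
  moreover have "(b, b + - s) \<in> \<phi> -` (- semistab C)"
    using \<open>- s \<notin> semistab C\<close> by (simp add: \<phi>_def minus_add_cancel del: add_uminus_conv_diff)
  ultimately obtain A B where AB: "open A" "open B" "(b, b + - s) \<in> A \<times> B"
      "A \<times> B \<subseteq> \<phi> -` (- semistab C)"
    by (rule open_prod_elim)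
  have "\<forall>\<^sub>F y' in nhds y. fibre C y' \<inter> A \<noteq> {}"
    using y b AB(1,3) by (simp add: lsc_fibres_at_def fibre_def)
  then obtain W where W: "open W" "y \<in> W" "\<And>y'. y' \<in> W \<Longrightarrow> fibre C y' \<inter> A \<noteq> {}"
    unfolding eventually_nhds by blast
  have "(y, b + - s) \<in> (W \<times> B) \<inter> C"
    using b' W(2) AB(3) by simp
  then have "(W \<times> B) \<inter> C \<noteq> {}"
    by (metis empty_iff)
  then obtain n where n: "skew_pow T f n p0 \<in> W \<times> B"
    using skew_orbit_p0_meets_open[OF open_Times[OF W(1) AB(2)]] by metis
  obtain x' t where xt: "skew_pow T f n p0 = (x', t)"
    by (cases "skew_pow T f n p0")
  with n W(3) obtain u where u: "u \<in> A" "(x', u) \<in> C"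
    by (auto simp: fibre_def)
  have "- u + t \<in> semistab C"
    using closure_skew_orbit_eq_C[of n] xt by (intro semistab_if_dense_orbit[OF _ u(2)]) simp
  moreover have "(u, t) \<in> A \<times> B"
    using u n xt by auto
  ultimately show False
    using AB(4) by (auto simp: \<phi>_def)
qed

lemma Stab_eq_semistab: "Stab C = semistab C"
  using uminus_in_semistab by (auto simp: Stab_iff_semistab)

lemma closed_Stab: "closed (Stab C)"
  by (simp add: Stab_eq_semistab closed_semistab)

lemma skew_pow_uminus_in_fibre:
  assumes "(Tpow T n y, u) \<in> C"
  shows "snd (skew_pow T f (- n) (Tpow T n y, u)) \<in> fibre C y"
proof -
  have "Tpow T (- n) (Tpow T n y) = y"
    using Tpow_add[OF bij_T, of "- n" n y] by simp
  then show ?thesis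
    using skew_pow_in_C[OF assms, of "- n"] by (simp add: skew_pow_def fibre_def)
qed

text \<open>A nonempty open set W over which all fibres meet a compact set V exists at a point of
  lower semicontinuity; finitely many translates of W cover X by minimality, and pulling V
  back along them gives a compact set meeting every fibre.\<close>
lemma ex_compact_section: "\<exists>K. compact K \<and> (\<forall>x. fibre C x \<inter> K \<noteq> {})"
proof -
  obtain z b where z: "lsc_fibres_at C z" and b: "(z, b) \<in> C"
    using ex_lsc_fibres_at_in_C by blast
  obtain U V where UV: "open U" "compact V" "b \<in> U" "U \<subseteq> V"
    using locally_compact unfolding locally_compact_space_def
    by (metis UNIV_I compactin_euclidean_iff open_openin topspace_euclidean)
  have "\<forall>\<^sub>F y in nhds z. fibre C y \<inter> U \<noteq> {}"
    using z b UV(1,3) by (simp add: lsc_fibres_at_def fibre_def)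
  then obtain W where W: "open W" "z \<in> W" "\<And>y. y \<in> W \<Longrightarrow> fibre C y \<inter> U \<noteq> {}"
    unfolding eventually_nhds by blast
  then obtain N where N: "finite N" "\<And>y. \<exists>n\<in>N. Tpow T n y \<in> W"
    using minimal_homeo_finite_return[OF compact_UNIV minimal] by blast
  define K where "K = (\<Union>n\<in>N. (\<lambda>p. snd (skew_pow T f (- n) p)) ` (UNIV \<times> V))"
  have "compact K"
    unfolding K_def using N(1) compact_Times[OF compact_UNIV UV(2)]
    by (intro compact_UN compact_continuous_image continuous_on_snd
        continuous_on_subset[OF continuous_on_skew_pow_T]) auto
  moreover have "fibre C y \<inter> K \<noteq> {}" for y
  proof -
    obtain n where n: "n \<in> N" "Tpow T n y \<in> W"
      using N(2) by blast
    then obtain u where u: "u \<in> U" "(Tpow T n y, u) \<in> C"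
      using W(3) by (auto simp: fibre_def)
    define c where "c = snd (skew_pow T f (- n) (Tpow T n y, u))"
    have "c \<in> fibre C y"
      unfolding c_def using u(2) by (rule skew_pow_uminus_in_fibre)
    moreover have "c \<in> K"
      unfolding K_def c_def using n(1) u(1) UV(4) by blast
    ultimately show ?thesis
      by blast
  qed
  ultimately show ?thesis
    by blast
qed

lemma C_subset_setprod:
  assumes K: "compact K" "\<And>x. fibre C x \<inter> K \<noteq> {}"
  shows "C \<subseteq> UNIV \<times> setprod K (Stab C)"
proof -
  have "skew_orbit T f p0 \<subseteq> UNIV \<times> setprod K (Stab C)"
  proof
    fix q
    assume "q \<in> skew_orbit T f p0"
    then obtain n where "q = skew_pow T f n p0"
      unfolding skew_orbit_def by blast
    moreover obtain x t where xt: "skew_pow T f n p0 = (x, t)"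
      by (cases "skew_pow T f n p0")
    moreover obtain k where k: "k \<in> K" "(x, k) \<in> C"
      using K(2)[of x] by (auto simp: fibre_def)
    have "- k + t \<in> Stab C"
      using closure_skew_orbit_eq_C[of n] xt k(2)
      by (simp add: semistab_if_dense_orbit Stab_eq_semistab)
    then have "t \<in> setprod K (Stab C)"
      unfolding setprod_def using k(1) by (force simp: add.assoc[symmetric])
    ultimately show "q \<in> UNIV \<times> setprod K (Stab C)"
      by simp
  qed
  moreover have "closed (UNIV \<times> setprod K (Stab C))"
    by (intro closed_Times closed_UNIV closed_setprod topological_group K(1) closed_Stab)
  ultimately have "closure (skew_orbit T f p0) \<subseteq> UNIV \<times> setprod K (Stab C)"
    by (rule closure_minimal)
  then show ?thesis
    by (simp add: C_eq)
qed

lemma fibre_eq_setprod: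
  assumes K: "compact K" "\<And>x. fibre C x \<inter> K \<noteq> {}"
  shows "fibre C x = setprod (K \<inter> fibre C x) (Stab C)"
proof (intro antisym subsetI)
  fix c
  assume "c \<in> fibre C x"
  then have c: "(x, c) \<in> C"
    by (simp add: fibre_def)
  then have "c \<in> setprod K (Stab C)"
    using C_subset_setprod[OF K] by blast
  then obtain k h where kh: "c = k + h" "k \<in> K" "h \<in> Stab C"
    unfolding setprod_def by blast
  then have "(x, k) \<in> C"
    using c Stab_add_mem_iff[OF kh(3), of x k] by simp
  with kh show "c \<in> setprod (K \<inter> fibre C x) (Stab C)"
    unfolding setprod_def fibre_def by blast
next
  fix c
  assume "c \<in> setprod (K \<inter> fibre C x) (Stab C)"
  then obtain k h where "c = k + h" "(x, k) \<in> C" "h \<in> Stab C"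
    unfolding setprod_def fibre_def by blast
  then show "c \<in> fibre C x"
    using Stab_add_mem_iff[of h C x k] by (simp add: fibre_def)
qed

lemma fibre_dense_orbit:
  assumes "(x, g) \<in> C" and dense: "closure (skew_orbit T f (x, g)) = C"
  shows "fibre C x = lcoset g (Stab C)"
proof (intro antisym subsetI)
  fix g'
  assume "g' \<in> fibre C x"
  then have "- g' + g \<in> Stab C"
    using semistab_if_dense_orbit[OF dense] by (simp add: fibre_def Stab_eq_semistab)
  then have "- (- g' + g) \<in> Stab C"
    using add_subgroup_Stab[of C] unfolding add_subgroup_def by blast
  then have "- g + g' \<in> Stab C"
    by (simp add: minus_add)
  moreover have "g' = g + (- g + g')"
    by (simp add: add.assoc[symmetric])
  ultimately show "g' \<in> lcoset g (Stab C)"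
    unfolding lcoset_def by blast
next
  fix g'
  assume "g' \<in> lcoset g (Stab C)"
  then obtain h where "g' = g + h" "h \<in> Stab C"
    unfolding lcoset_def by blast
  then show "g' \<in> fibre C x"
    using assms(1) Stab_add_mem_iff[of h C x g] by (simp add: fibre_def)
qed

lemma fibre_eq_compact_setprod: "\<exists>K. compact K \<and> fibre C x = setprod K (Stab C)"
proof -
  obtain K where K: "compact K" "\<And>x. fibre C x \<inter> K \<noteq> {}"
    using ex_compact_section by blast
  have "fibre C x = Pair x -` C"
    by (auto simp: fibre_def)
  moreover have "continuous_on UNIV (Pair x :: 'g \<Rightarrow> 'a \<times> 'g)"
    using continuous_on_Pair[OF continuous_on_const continuous_on_id] by blast
  ultimately have "closed (fibre C x)"
    using closed_vimage[OF closed_C] by simp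
  with K(1) have "compact (K \<inter> fibre C x)"
    by (rule compact_Int_closed)
  with fibre_eq_setprod[OF K] show ?thesis
    by blast
qed

lemma coset_proj_right_shift:
  assumes "h \<in> Stab C"
  shows "(\<lambda>(x, g). (x, lcoset g (Stab C))) (right_shift h q) = (\<lambda>(x, g). (x, lcoset g (Stab C))) q"
proof -
  have "- h \<in> Stab C"
    using assms add_subgroup_Stab[of C] by (simp add: add_subgroup_def)
  then show ?thesis
    by (cases q) (simp add: right_shift_def lcoset_add_absorb[OF add_subgroup_Stab]
        del: add_uminus_conv_diff)
qed

lemma compactin_quot_set:
  "compactin (prod_topology euclidean (coset_space_topology (Stab C))) (quot_set C (Stab C))"
proof -
  obtain K where K: "compact K" "\<And>x. fibre C x \<inter> K \<noteq> {}"
    using ex_compact_section by blast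
  have "quot_set C (Stab C) = (\<lambda>(x, g). (x, lcoset g (Stab C))) ` (C \<inter> UNIV \<times> K)"
  proof (intro antisym subsetI)
    fix p
    assume "p \<in> quot_set C (Stab C)"
    then obtain x c where p: "p = (x, lcoset c (Stab C))" "c \<in> fibre C x"
      by (auto simp: quot_set_def fibre_def)
    then have "c \<in> setprod (K \<inter> fibre C x) (Stab C)"
      using fibre_eq_setprod[OF K] by blast
    then obtain k h where kh: "c = k + h" "k \<in> K" "(x, k) \<in> C" "h \<in> Stab C"
      unfolding setprod_def fibre_def by blast
    then have "p = (\<lambda>(x, g). (x, lcoset g (Stab C))) (x, k)"
      using p(1) by (simp add: lcoset_add_absorb[OF add_subgroup_Stab])
    with kh show "p \<in> (\<lambda>(x, g). (x, lcoset g (Stab C))) ` (C \<inter> UNIV \<times> K)"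
      by blast
  qed (auto simp: quot_set_def)
  moreover have "compact (C \<inter> UNIV \<times> K)"
    using compact_Int_closed[OF compact_Times[OF compact_UNIV K(1)] closed_C]
    by (simp add: Int_commute)
  ultimately show ?thesis
    using image_compactin[OF _ continuous_map_coset_proj] by (metis compactin_euclidean_iff)
qed

lemma quot_pow_image_subset: "quot_pow T f n ` quot_set C (Stab C) \<subseteq> quot_set C (Stab C)"
proof -
  have "quot_pow T f n ` quot_set C (Stab C)
      = (\<lambda>(x, g). (x, lcoset g (Stab C))) ` skew_pow T f n ` C"
    unfolding quot_set_def image_image quot_pow_coset_proj ..
  also have "\<dots> \<subseteq> quot_set C (Stab C)"
    unfolding quot_set_def using skew_pow_in_C by blast
  finally show ?thesis .
qed

lemma continuous_map_quot_pow:
  "continuous_map (quot_top C (Stab C)) (quot_top C (Stab C)) (quot_pow T f n)"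
proof -
  have "continuous_map (prod_topology euclidean (coset_space_topology (Stab C)))
      (prod_topology euclidean (coset_space_topology (Stab C))) (quot_pow T f n)"
    unfolding quot_pow_def[abs_def] using minimal
    by (intro continuous_map_coset_action locally_compact_X topological_group continuous_on_Tpow
        continuous_on_cocycle continuous_f) (simp_all add: minimal_homeo_def)
  then show ?thesis
    unfolding quot_top_def
    by (intro continuous_map_into_subtopology continuous_map_from_subtopology)
      (use quot_pow_image_subset[of n] in auto)
qed

lemma homeomorphic_map_quot_map:
  "homeomorphic_map (quot_top C (Stab C)) (quot_top C (Stab C)) (quot_map T f)"
proof -
  have "quot_pow T f (- 1) (quot_pow T f 1 p) = p" "quot_pow T f 1 (quot_pow T f (- 1) p) = p" for p
    by (simp_all flip: quot_pow_add[OF bij_T])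
  then have "homeomorphic_maps (quot_top C (Stab C)) (quot_top C (Stab C))
      (quot_pow T f 1) (quot_pow T f (- 1))"
    by (simp add: homeomorphic_maps_def continuous_map_quot_pow)
  then show ?thesis
    unfolding homeomorphic_map_maps quot_pow_1 by blast
qed

lemma closed_fst_image_if_Stab_invariant:
  assumes E: "closed E" "E \<subseteq> C"
    and Stab_inv: "\<And>h. h \<in> Stab C \<Longrightarrow> right_shift h ` E \<subseteq> E"
  shows "closed (fst ` E)"
proof -
  obtain K where K: "compact K" "\<And>x. fibre C x \<inter> K \<noteq> {}"
    using ex_compact_section by blast
  have "fst ` E \<subseteq> fst ` (E \<inter> UNIV \<times> K)"
  proof
    fix x
    assume "x \<in> fst ` E"
    then obtain c where c: "(x, c) \<in> E"
      by force
    then have "c \<in> setprod (K \<inter> fibre C x) (Stab C)"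
      using E(2) fibre_eq_setprod[OF K] by (auto simp: fibre_def)
    then obtain k h where kh: "c = k + h" "k \<in> K" "h \<in> Stab C"
      unfolding setprod_def by blast
    then have "right_shift h (x, c) = (x, k)"
      by (simp add: right_shift_def add.assoc)
    with c kh(3) Stab_inv have "(x, k) \<in> E"
      by (metis image_subset_iff)
    with kh(2) show "x \<in> fst ` (E \<inter> UNIV \<times> K)"
      by force
  qed
  then have "fst ` E = fst ` (E \<inter> UNIV \<times> K)"
    by blast
  then show ?thesis
    using closed_fst_image_Int_Times[OF E(1) K(1)] by simp
qed

lemma invariant_closed_subset_eq_C:
  assumes E: "closed E" "E \<subseteq> C" "E \<noteq> {}"
    and Stab_inv: "\<And>h. h \<in> Stab C \<Longrightarrow> right_shift h ` E \<subseteq> E"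
    and skew_inv: "\<And>n. skew_pow T f n ` E \<subseteq> E"
  shows "E = C"
proof -
  obtain y b where yb: "(y, b) \<in> E"
    using E(3) by auto
  have "range (\<lambda>n. Tpow T n y) \<subseteq> fst ` E"
    using skew_inv yb by (force simp: skew_pow_def)
  then have "closure (range (\<lambda>n. Tpow T n y)) \<subseteq> fst ` E"
    using closed_fst_image_if_Stab_invariant[OF E(1,2) Stab_inv] by (rule closure_minimal)
  then have "fst p0 \<in> fst ` E"
    using minimal by (auto simp: minimal_homeo_def)
  then obtain g' where g': "(fst p0, g') \<in> E"
    by force
  then have "g' \<in> lcoset (snd p0) (Stab C)"
    using fibre_dense_orbit[of "fst p0" "snd p0"] p0_in_C E(2) C_eq by (auto simp: fibre_def)
  then obtain h where h: "g' = snd p0 + h" "h \<in> Stab C"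
    unfolding lcoset_def by blast
  then have "p0 = right_shift h (fst p0, g')"
    by (simp add: right_shift_def add.assoc)
  with g' h(2) Stab_inv have "p0 \<in> E"
    by (metis image_subset_iff)
  then have "skew_orbit T f p0 \<subseteq> E"
    using skew_inv by (auto simp: skew_orbit_def)
  then have "C \<subseteq> E"
    unfolding C_eq using E(1) by (rule closure_minimal)
  with E(2) show ?thesis
    by blast
qed

lemma closure_Stab_orbit_eq_C:
  assumes "q \<in> C"
  shows "closure (\<Union>h\<in>Stab C. right_shift h ` skew_orbit T f q) = C"
proof (rule invariant_closed_subset_eq_C)
  let ?O = "\<Union>h\<in>Stab C. right_shift h ` skew_orbit T f q"
  have "?O \<subseteq> C"
    using assms by (auto simp: skew_orbit_def right_shift_Stab_mem skew_pow_in_C)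
  then show "closure ?O \<subseteq> C"
    using closed_C by (rule closure_minimal)
  show "closure ?O \<noteq> {}"
    using add_subgroup_Stab[of C] by (auto simp: add_subgroup_def skew_orbit_def)
  show "right_shift h ` closure ?O \<subseteq> closure ?O" if h: "h \<in> Stab C" for h
  proof -
    have "right_shift h ` ?O = (\<Union>h'\<in>Stab C. right_shift (h + h') ` skew_orbit T f q)"
      by (simp add: image_UN image_image right_shift_add)
    also have "\<dots> \<subseteq> ?O"
      using h add_subgroup_Stab[of C] unfolding add_subgroup_def by blast
    finally have "right_shift h ` ?O \<subseteq> ?O" .
    from order_trans[OF this closure_subset] show ?thesis
      by (rule image_closure_subset[OF continuous_on_subset[OF
            continuous_on_right_shift[OF topological_group] subset_UNIV] closed_closure])
  qed
  show "skew_pow T f n ` closure ?O \<subseteq> closure ?O" for n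
  proof -
    have "skew_pow T f n ` ?O \<subseteq> ?O"
      by (auto simp: skew_orbit_def right_shift_skew_pow[symmetric]
          skew_pow_add[OF bij_T, symmetric])
    from order_trans[OF this closure_subset] show ?thesis
      by (rule image_closure_subset[OF continuous_on_subset[OF
            continuous_on_skew_pow_T subset_UNIV] closed_closure])
  qed
qed (simp add: closed_closure)

lemma quot_orbit_dense:
  assumes "p \<in> quot_set C (Stab C)"
  shows "(quot_top C (Stab C)) closure_of (range (\<lambda>n. quot_pow T f n p)) = quot_set C (Stab C)"
proof -
  let ?\<pi> = "\<lambda>(x, g). (x, lcoset g (Stab C))"
  obtain q where q: "q \<in> C" "p = ?\<pi> q"
    using assms by (auto simp: quot_set_def)
  let ?O = "\<Union>h\<in>Stab C. right_shift h ` skew_orbit T f q"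
  have "?\<pi> (right_shift h (skew_pow T f n q)) = quot_pow T f n p" if "h \<in> Stab C" for h n
    using that by (simp add: coset_proj_right_shift q(2) quot_pow_coset_proj)
  then have "?\<pi> ` ?O = (\<Union>h\<in>Stab C. range (\<lambda>n. quot_pow T f n p))"
    by (simp add: image_UN image_image skew_orbit_def)
  also have "\<dots> = range (\<lambda>n. quot_pow T f n p)"
    using add_subgroup_Stab[of C] by (auto simp: add_subgroup_def)
  finally have "?\<pi> ` ?O = range (\<lambda>n. quot_pow T f n p)" .
  moreover have "continuous_map (subtopology euclidean C) (quot_top C (Stab C)) ?\<pi>"
    unfolding quot_top_def quot_set_def
    by (intro continuous_map_into_subtopology continuous_map_from_subtopology
        continuous_map_coset_proj) auto
  ultimately have "?\<pi> ` ((subtopology euclidean C) closure_of ?O)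
      \<subseteq> (quot_top C (Stab C)) closure_of (range (\<lambda>n. quot_pow T f n p))"
    using continuous_map_image_closure_subset by metis
  moreover have "(subtopology euclidean C) closure_of ?O = C"
    using closure_Stab_orbit_eq_C[OF q(1)] closure_subset[of ?O]
    by (auto simp: closure_of_subtopology Int_absorb1)
  ultimately have "quot_set C (Stab C)
      \<subseteq> (quot_top C (Stab C)) closure_of (range (\<lambda>n. quot_pow T f n p))"
    by (simp add: quot_set_def)
  moreover have "(quot_top C (Stab C)) closure_of (range (\<lambda>n. quot_pow T f n p))
      \<subseteq> quot_set C (Stab C)"
    by (metis closure_of_subset_topspace topspace_quot_top)
  ultimately show ?thesis
    by (rule antisym[rotated])
qed

end

theorem theorem2p1:
  fixes T :: "'a::metric_space \<Rightarrow> 'a"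
    and f :: "'a \<Rightarrow> 'g::{group_add, t2_space, second_countable_topology}"
    and C :: "('a \<times> 'g) set"
  assumes X_compact: "compact (UNIV :: 'a set)"
    and T_minimal: "minimal_homeo T"
    and G_topgroup: "topological_group TYPE('g)"
    and G_lc: "locally_compact_space (euclidean :: 'g topology)"
    and f_cont: "continuous_on UNIV f"
    and f_regular: "regular_cocycle T f"
    and C_soc: "surj_orbit_closure T f C"
  shows "(\<forall>x g. (x, g) \<in> C \<and> closure (skew_orbit T f (x, g)) = C
             \<longrightarrow> fibre C x = lcoset g (Stab C))
     \<and> compactin (prod_topology euclidean (coset_space_topology (Stab C))) (quot_set C (Stab C))
     \<and> quot_map T f ` quot_set C (Stab C) \<subseteq> quot_set C (Stab C)
     \<and> homeomorphic_map (quot_top C (Stab C)) (quot_top C (Stab C)) (quot_map T f)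
     \<and> (\<forall>p \<in> quot_set C (Stab C).
          (quot_top C (Stab C)) closure_of (range (\<lambda>n. quot_pow T f n p)) = quot_set C (Stab C))
     \<and> (\<forall>x. \<exists>K. compact K \<and> fibre C x = setprod K (Stab C))"
proof -
  obtain p0 where "C = closure (skew_orbit T f p0)" "fst ` C = UNIV"
    using C_soc unfolding surj_orbit_closure_def by blast
  then interpret surjective_orbit_closure T f C p0
    using X_compact T_minimal G_topgroup G_lc f_cont by unfold_locales
  show ?thesis
    using fibre_dense_orbit compactin_quot_set quot_pow_image_subset[of 1]
      homeomorphic_map_quot_map quot_orbit_dense fibre_eq_compact_setprod
    by (simp add: quot_pow_1)
qed

end
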